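(* For $b\in(0,\pi/2)$ let $I_1(b)=\int_{-b}^{b}\frac{\cos^5\varphi}{\sqrt{\cos^4\varphi-\cos^4b}}\,d\varphi$ and $I_2(b)=\int_{-b}^{b}\frac{\cos^3\varphi}{\sqrt{\cos^4\varphi-\cos^4b}}\,d\varphi$. Then the function $b\mapsto\frac{I_1(b)}{I_2(b)^3}$ is decreasing on $(0,\pi/2)$. *)

theory Defs
  imports "HOL-Analysis.Analysis"
begin

text \<open>The (improper, absolutely convergent) integrals, taken as Lebesgue integrals
  over the interval from -b to b.\<close>

definition I1 :: "real \<Rightarrow> real" where
  "I1 b = (LBINT phi=-b..b. cos phi ^ 5 / sqrt (cos phi ^ 4 - cos b ^ 4))"

definition I2 :: "real \<Rightarrow> real" where
  "I2 b = (LBINT phi=-b..b. cos phi ^ 3 / sqrt (cos phi ^ 4 - cos b ^ 4))"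

end

theory Submission
  imports Defs
begin

(* Fix b in (0, pi/2), put m = cos^2 b in (0,1) and substitute
   sin phi = sin b * sin t.  Then cos^2 phi = W m t - m with
   W m t = 1 + m - (1 - m) sin^2 t, and both integrals become proper integrals over
   [-pi/2, pi/2] of (W - m)^k / sqrt W (k = 2 for I1, k = 1 for I2).  Expanding the powers,
   I1 and I2 are combinations of the moments X, Y, S of W of orders -1/2, 1/2, 3/2.
   Two explicit antiderivatives, sin t cos t / sqrt W and sin t cos t * sqrt W, vanish at
   the ends and give Y = 2m(1+m) T and 3S = (2+6m) Y - 2m(1+m) X (T of order -3/2), so
     I1 = (2Y + (m^2 - 2m) X) / 3   and   I2 = Y - m X.
   Differentiating under the integral sign in m expresses X' and Y' through X and Y again,
   and a polynomial identity shows that the derivative of I1/I2^3 as a function of m has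
   the sign of m Y (Y - 2mX) > 0.  As cos^2 is decreasing on (0, pi/2), the ratio is
   decreasing in b. *)

(* The weight obtained after the substitution sin phi = sin b * sin t, written with the
   parameter m = cos^2 b.  Everything below is expressed through W. *)
definition W :: "real \<Rightarrow> real \<Rightarrow> real" where
  "W m t = 1 + m - (1 - m) * (sin t)^2"

(* The basic identity tying W to cos t; it gives positivity and 2m < W inside the interval. *)
lemma W_minus_2m: "W m t - 2 * m = (1 - m) * (cos t)^2"
  unfolding W_def by (simp add: cos_squared_eq algebra_simps)

lemma W_pos:
  assumes "0 < m" "m \<le> 1"
  shows "0 < W m t"
proof -
  have "0 \<le> (1 - m) * (cos t)^2" using assms by simp
  then show ?thesis using W_minus_2m[of m t] assms by linarith
qed

lemma W_continuous: "continuous_on A (\<lambda>t. W m t)"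
  unfolding W_def by (intro continuous_intros)

lemma sqrt_W_deriv:
  assumes "0 < m" "m \<le> 1"
  shows "((\<lambda>t. sqrt (W m t)) has_real_derivative - (1 - m) * sin t * cos t / sqrt (W m t)) (at t)"
  using W_pos[OF assms, of t] unfolding W_def
  by (auto intro!: derivative_eq_intros simp: field_simps)

(* On the curve t |-> W m t the quantities cos(2t) and (sin t cos t)^2 are polynomials in W;
   this is what turns the two t-derivatives below into combinations of powers of sqrt W. *)
lemma sin_cos_in_W:
  "(1 - m) * ((cos t)^2 - (sin t)^2) = 2 * W m t - 1 - 3 * m"
  "(1 - m)^2 * (sin t * cos t)^2 = (1 + m - W m t) * (W m t - 2 * m)"
proof -
  have s: "(1 - m) * (sin t)^2 = 1 + m - W m t" and c: "(1 - m) * (cos t)^2 = W m t - 2 * m"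
    using W_minus_2m[of m t] by (auto simp: W_def)
  show "(1 - m) * ((cos t)^2 - (sin t)^2) = 2 * W m t - 1 - 3 * m"
    using s c by (simp add: algebra_simps)
  have "(1 - m)^2 * (sin t * cos t)^2 = ((1 - m) * (sin t)^2) * ((1 - m) * (cos t)^2)"
    by algebra
  then show "(1 - m)^2 * (sin t * cos t)^2 = (1 + m - W m t) * (W m t - 2 * m)"
    unfolding s c .
qed

lemma sin_cos_deriv: "((\<lambda>t. sin t * cos t) has_real_derivative (cos t)^2 - (sin t)^2) (at t)"
  by (auto intro!: derivative_eq_intros simp: power2_eq_square)

(* Two explicit antiderivatives.  Both vanish at t = -pi/2 and t = pi/2, so integrating them
   over the half period yields linear relations between the moments of W defined below. *)
lemma sin_cos_div_sqrt_W_deriv: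
  assumes "0 < m" "m < 1"
  shows "((\<lambda>t. sin t * cos t / sqrt (W m t)) has_real_derivative
     (sqrt (W m t) - 2*m*(1+m) / (W m t * sqrt (W m t))) / (1-m)) (at t)"
proof -
  let ?w = "W m t"
  have w: "0 < ?w" using W_pos assms by simp
  then have r: "sqrt ?w * sqrt ?w = ?w" "0 < sqrt ?w" by simp_all
  have "(1 - m) * (((cos t)^2 - (sin t)^2) * ?w + (1 - m) * (sin t * cos t)^2)
      = ((1 - m) * ((cos t)^2 - (sin t)^2)) * ?w + (1 - m)^2 * (sin t * cos t)^2"
    by algebra
  also have "\<dots> = ?w^2 - 2*m*(1+m)" unfolding sin_cos_in_W by algebra
  finally have core: "(1 - m) * (((cos t)^2 - (sin t)^2) * ?w + (1 - m) * (sin t * cos t)^2)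
      = ?w^2 - 2*m*(1+m)" .
  let ?quotient_rule = "(((cos t)^2 - (sin t)^2) * sqrt ?w - sin t * cos t * (- (1 - m) * sin t * cos t / sqrt ?w)) /
      (sqrt ?w * sqrt ?w)"
  have "?quotient_rule = (((cos t)^2 - (sin t)^2) * ?w + (1 - m) * (sin t * cos t)^2) / (?w * sqrt ?w)"
    using r by (simp add: field_simps power2_eq_square)
  also have "\<dots> = (?w^2 - 2*m*(1+m)) / ((1 - m) * (?w * sqrt ?w))"
    unfolding core[symmetric] using assms by simp
  also have "\<dots> = (sqrt ?w - 2*m*(1+m) / (?w * sqrt ?w)) / (1-m)"
    using r w assms by (simp add: field_simps power2_eq_square)
  finally have simplified: "?quotient_rule = (sqrt ?w - 2*m*(1+m) / (?w * sqrt ?w)) / (1-m)" .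
  have "sqrt ?w \<noteq> 0" using r by simp
  from DERIV_divide[OF sin_cos_deriv sqrt_W_deriv[OF assms(1) less_imp_le[OF assms(2)]] this]
  show ?thesis by (rule DERIV_cong) (rule simplified)
qed

lemma sin_cos_mult_sqrt_W_deriv:
  assumes "0 < m" "m < 1"
  shows "((\<lambda>t. sin t * cos t * sqrt (W m t)) has_real_derivative
     (3 * (W m t * sqrt (W m t)) - (2+6*m) * sqrt (W m t) + 2*m*(1+m) / sqrt (W m t)) / (1-m)) (at t)"
proof -
  let ?w = "W m t"
  have w: "0 < ?w" using W_pos assms by simp
  then have r: "sqrt ?w * sqrt ?w = ?w" "0 < sqrt ?w" by simp_all
  have "(1 - m) * (((cos t)^2 - (sin t)^2) * ?w - (1 - m) * (sin t * cos t)^2)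
      = ((1 - m) * ((cos t)^2 - (sin t)^2)) * ?w - (1 - m)^2 * (sin t * cos t)^2"
    by algebra
  also have "\<dots> = 3 * ?w^2 - (2+6*m) * ?w + 2*m*(1+m)" unfolding sin_cos_in_W by algebra
  finally have core: "(1 - m) * (((cos t)^2 - (sin t)^2) * ?w - (1 - m) * (sin t * cos t)^2)
      = 3 * ?w^2 - (2+6*m) * ?w + 2*m*(1+m)" .
  let ?product_rule = "sin t * cos t * (- (1 - m) * sin t * cos t / sqrt ?w) + ((cos t)^2 - (sin t)^2) * sqrt ?w"
  have "?product_rule = (((cos t)^2 - (sin t)^2) * ?w - (1 - m) * (sin t * cos t)^2) / sqrt ?w"
    using r by (simp add: field_simps power2_eq_square)
  also have "\<dots> = (3 * ?w^2 - (2+6*m) * ?w + 2*m*(1+m)) / ((1 - m) * sqrt ?w)"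
    unfolding core[symmetric] using assms by simp
  also have "\<dots> = (3 * (?w * sqrt ?w) - (2+6*m) * sqrt ?w + 2*m*(1+m) / sqrt ?w) / (1-m)"
    using r w assms by (simp add: field_simps power2_eq_square)
  finally have simplified: "?product_rule = (3 * (?w * sqrt ?w) - (2+6*m) * sqrt ?w + 2*m*(1+m) / sqrt ?w) / (1-m)" .
  from DERIV_mult'[OF sin_cos_deriv sqrt_W_deriv[OF assms(1) less_imp_le[OF assms(2)]]]
  show ?thesis by (rule DERIV_cong) (rule simplified)
qed

abbreviation Ipi2 :: "real set" where "Ipi2 \<equiv> {-pi/2..pi/2}"

definition X :: "real \<Rightarrow> real" where "X m = integral Ipi2 (\<lambda>t. 1 / sqrt (W m t))"

definition Y :: "real \<Rightarrow> real" where "Y m = integral Ipi2 (\<lambda>t. sqrt (W m t))"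

definition T :: "real \<Rightarrow> real" where "T m = integral Ipi2 (\<lambda>t. 1 / (W m t * sqrt (W m t)))"

definition S :: "real \<Rightarrow> real" where "S m = integral Ipi2 (\<lambda>t. W m t * sqrt (W m t))"

lemma W_moments_continuous:
  assumes "0 < m" "m \<le> 1"
  shows "continuous_on A (\<lambda>t. 1 / sqrt (W m t))" "continuous_on A (\<lambda>t. sqrt (W m t))"
    "continuous_on A (\<lambda>t. 1 / (W m t * sqrt (W m t)))" "continuous_on A (\<lambda>t. W m t * sqrt (W m t))"
  using W_pos[OF assms] unfolding W_def
  by (intro continuous_intros; force)+

lemma W_moments_has_integral:
  assumes "0 < m" "m \<le> 1"
  shows "((\<lambda>t. 1 / sqrt (W m t)) has_integral X m) Ipi2"
    "((\<lambda>t. sqrt (W m t)) has_integral Y m) Ipi2"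
    "((\<lambda>t. 1 / (W m t * sqrt (W m t))) has_integral T m) Ipi2"
    "((\<lambda>t. W m t * sqrt (W m t)) has_integral S m) Ipi2"
  unfolding X_def Y_def T_def S_def
  by (intro integrable_integral integrable_continuous_real W_moments_continuous[OF assms])+

lemma has_integral_derivative_vanishing_ends:
  fixes F f :: "real \<Rightarrow> real"
  assumes "a \<le> b" "\<And>t. (F has_real_derivative f t) (at t)" "F a = 0" "F b = 0"
  shows "(f has_integral 0) {a..b}"
proof -
  have "(f has_integral (F b - F a)) {a..b}"
    using assms(1,2) by (intro fundamental_theorem_of_calculus)
      (auto simp: has_real_derivative_iff_has_vector_derivative[symmetric] intro: has_field_derivative_at_within)
  with assms(3,4) show ?thesis by simp
qed

lemma Y_eq_T:
  assumes "0 < m" "m < 1"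
  shows "Y m = 2*m*(1+m) * T m"
proof -
  have "((\<lambda>t. (sqrt (W m t) - 2*m*(1+m) / (W m t * sqrt (W m t))) / (1-m)) has_integral 0) Ipi2"
    by (rule has_integral_derivative_vanishing_ends[OF _ sin_cos_div_sqrt_W_deriv[OF assms]]) auto
  moreover have "((\<lambda>t. (sqrt (W m t) - 2*m*(1+m) / (W m t * sqrt (W m t))) / (1-m)) has_integral
      (Y m - 2*m*(1+m) * T m) / (1-m)) Ipi2"
    using W_moments_has_integral[of m] assms
    by (intro has_integral_divide has_integral_diff) (auto dest: has_integral_mult_right[where c="2*m*(1+m)"])
  ultimately have "(Y m - 2*m*(1+m) * T m) / (1-m) = 0" by (rule has_integral_unique[rotated])
  with assms show ?thesis by simp
qed

lemma S_eq:
  assumes "0 < m" "m < 1"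
  shows "3 * S m = (2 + 6*m) * Y m - 2*m*(1+m) * X m"
proof -
  let ?f = "\<lambda>t. (3 * (W m t * sqrt (W m t)) - (2+6*m) * sqrt (W m t) + 2*m*(1+m) / sqrt (W m t)) / (1-m)"
  have "(?f has_integral 0) Ipi2"
    by (rule has_integral_derivative_vanishing_ends[OF _ sin_cos_mult_sqrt_W_deriv[OF assms]]) auto
  moreover have "(?f has_integral (3 * S m - (2+6*m) * Y m + 2*m*(1+m) * X m) / (1-m)) Ipi2"
  proof -
    have "((\<lambda>t. 2*m*(1+m) / sqrt (W m t)) has_integral 2*m*(1+m) * X m) Ipi2"
      using has_integral_mult_right[OF W_moments_has_integral(1)] assms by simp
    then show ?thesis
      using W_moments_has_integral[of m] assms
      by (intro has_integral_divide has_integral_diff has_integral_add has_integral_mult_right) auto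
  qed
  ultimately have "(3 * S m - (2+6*m) * Y m + 2*m*(1+m) * X m) / (1-m) = 0"
    by (rule has_integral_unique[rotated])
  with assms show ?thesis by simp
qed

(* Positivity: X > 0, and Y > 2mX because W > 2m on the open interval. *)
lemma X_pos:
  assumes "0 < m" "m \<le> 1"
  shows "0 < X m"
proof -
  have "integral Ipi2 (\<lambda>t. 0) < integral Ipi2 (\<lambda>t. 1 / sqrt (W m t))"
  proof (rule integral_less_real)
    show "{-pi/2<..<pi/2} \<noteq> {}" using pi_gt_zero by (simp add: not_le)
  qed (use W_pos[OF assms] W_moments_continuous[OF assms] in auto)
  then show ?thesis unfolding X_def by simp
qed

lemma Y_gt_2mX:
  assumes "0 < m" "m < 1"
  shows "2 * m * X m < Y m"
proof -
  have "integral Ipi2 (\<lambda>t. 2 * m * (1 / sqrt (W m t))) < integral Ipi2 (\<lambda>t. sqrt (W m t))"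
  proof (rule integral_less_real)
    fix t assume t: "t \<in> {-pi/2<..<pi/2}"
    then have "0 < cos t" by (intro cos_gt_zero_pi) auto
    then have "0 < (1 - m) * (cos t)^2" using assms by simp
    then have "2 * m < W m t" using W_minus_2m[of m t] by linarith
    then show "2 * m * (1 / sqrt (W m t)) < sqrt (W m t)"
      using W_pos[of m t] assms by (simp add: field_simps)
  next
    show "{-pi/2<..<pi/2} \<noteq> {}" using pi_gt_zero by (simp add: not_le)
  next
    show "continuous_on Ipi2 (\<lambda>t. 2 * m * (1 / sqrt (W m t)))"
      using assms by (intro continuous_intros W_moments_continuous) auto
  qed (use assms W_moments_continuous in auto)
  then show ?thesis unfolding X_def Y_def by (simp only: integral_mult_right)
qed

(* Differentiation under the integral sign in m.  Since dW/dm = 1 + sin^2 t = (2 - W)/(1 - m),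
   the derivative of any moment is again an integral of a function of W alone. *)
lemma W_moment_deriv:
  fixes f f' :: "real \<Rightarrow> real"
  assumes df: "\<And>w. 0 < w \<Longrightarrow> (f has_real_derivative f' w) (at w)"
    and cf': "continuous_on {0<..} f'"
    and m0: "0 < m0" "m0 < 1"
  shows "((\<lambda>m. integral Ipi2 (\<lambda>t. f (W m t))) has_real_derivative
           integral Ipi2 (\<lambda>t. (2 - W m0 t) * f' (W m0 t)) / (1 - m0)) (at m0)"
proof -
  let ?U = "{0<..<1::real}"
  have Wpos: "0 < W m t" if "m \<in> ?U" for m t using W_pos that by auto
  have cf: "continuous_on {0<..} f"
    using df by (intro DERIV_continuous_on) (auto intro: has_field_derivative_at_within)
  have dW: "((\<lambda>m. f (W m t)) has_real_derivative (1 + (sin t)^2) * f' (W m t)) (at m within ?U)"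
    if "m \<in> ?U" for m t
  proof -
    have "((\<lambda>m. W m t) has_real_derivative 1 + (sin t)^2) (at m within ?U)"
      unfolding W_def by (auto intro!: derivative_eq_intros simp: algebra_simps)
    from DERIV_chain2[OF df[OF Wpos[OF that]] this] show ?thesis by (simp add: mult.commute)
  qed
  have "((\<lambda>m. integral (cbox (-pi/2) (pi/2)) (\<lambda>t. f (W m t))) has_real_derivative
      integral (cbox (-pi/2) (pi/2)) (\<lambda>t. (1 + (sin t)^2) * f' (W m0 t))) (at m0 within ?U)"
  proof (rule leibniz_rule_field_derivative)
    show "(\<lambda>t. f (W m t)) integrable_on cbox (- pi / 2) (pi / 2)" if "m \<in> ?U" for m
      using Wpos[OF that] unfolding W_def cbox_interval
      by (intro integrable_continuous_real continuous_on_compose2[OF cf] continuous_intros) auto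
    show "continuous_on (?U \<times> cbox (- pi / 2) (pi / 2)) (\<lambda>(m, t). (1 + (sin t)^2) * f' (W m t))"
      using Wpos unfolding W_def split_beta
      by (intro continuous_intros continuous_on_compose2[OF cf']) auto
  qed (use dW m0 in auto)
  moreover have "(1 + (sin t)^2) * f' (W m0 t) = (2 - W m0 t) * f' (W m0 t) / (1 - m0)" for t
    using m0 unfolding W_def by (simp add: field_simps)
  ultimately show ?thesis
    using m0 by (simp add: at_within_open[OF _ open_greaterThanLessThan])
qed

(* The resulting derivatives of X and Y; together with Y = 2m(1+m) T they close up on X and Y. *)
lemma X_deriv:
  assumes "0 < m" "m < 1"
  shows "(X has_real_derivative (X m / 2 - T m) / (1 - m)) (at m)"
proof -
  have d: "((\<lambda>w. 1 / sqrt w) has_real_derivative - 1 / (2 * (w * sqrt w))) (at w)" if "0 < w" for w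
    using that by (auto intro!: derivative_eq_intros simp: field_simps)
  have c: "continuous_on {0<..} (\<lambda>w. - 1 / (2 * (w * sqrt w)))"
    by (intro continuous_intros) auto
  have int: "integral Ipi2 (\<lambda>t. (2 - W m t) * (- 1 / (2 * (W m t * sqrt (W m t))))) = X m / 2 - T m"
  proof -
    have "((\<lambda>t. (1 / sqrt (W m t)) / 2 - 1 / (W m t * sqrt (W m t))) has_integral X m / 2 - T m) Ipi2"
      using assms by (intro has_integral_diff has_integral_divide W_moments_has_integral) auto
    moreover have "(2 - W m t) * (- 1 / (2 * (W m t * sqrt (W m t)))) = (1 / sqrt (W m t)) / 2 - 1 / (W m t * sqrt (W m t))" for t
      using W_pos[of m t] assms by (simp add: field_simps)
    ultimately show ?thesis by (simp add: integral_unique)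
  qed
  from W_moment_deriv[OF d c assms] show ?thesis
    unfolding int X_def[abs_def, symmetric] .
qed

lemma Y_deriv:
  assumes "0 < m" "m < 1"
  shows "(Y has_real_derivative (X m - Y m / 2) / (1 - m)) (at m)"
proof -
  have d: "(sqrt has_real_derivative 1 / (2 * sqrt w)) (at w)" if "0 < w" for w
    using that by (auto intro!: derivative_eq_intros simp: field_simps)
  have c: "continuous_on {0<..} (\<lambda>w. 1 / (2 * sqrt w))"
    by (intro continuous_intros) auto
  have int: "integral Ipi2 (\<lambda>t. (2 - W m t) * (1 / (2 * sqrt (W m t)))) = X m - Y m / 2"
  proof -
    have "((\<lambda>t. 1 / sqrt (W m t) - sqrt (W m t) / 2) has_integral X m - Y m / 2) Ipi2"
      using assms by (intro has_integral_diff has_integral_divide W_moments_has_integral) auto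
    moreover have "(2 - W m t) * (1 / (2 * sqrt (W m t))) = 1 / sqrt (W m t) - sqrt (W m t) / 2" for t
      using W_pos[of m t] assms by (simp add: field_simps)
    ultimately show ?thesis by (simp add: integral_unique)
  qed
  from W_moment_deriv[OF d c assms] show ?thesis
    unfolding int Y_def[abs_def, symmetric] .
qed

(* I1 and I2 written through m = cos^2 b (see I1_eq and I2_eq below), and their ratio. *)
definition I1_of :: "real \<Rightarrow> real" where
  "I1_of m = (2 * Y m + (m^2 - 2 * m) * X m) / 3"

definition I2_of :: "real \<Rightarrow> real" where
  "I2_of m = Y m - m * X m"

lemma I2_of_pos:
  assumes "0 < m" "m < 1"
  shows "0 < I2_of m"
proof -
  have "0 < m * X m" using X_pos[of m] assms by simp
  then show ?thesis using Y_gt_2mX[OF assms] unfolding I2_of_def by linarith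
qed

(* Read x, y as X m, Y m and x', y' as their derivatives;
   then with P = 2y + (m^2 - 2m) x (three times I1) and Q = y - m x (= I2) the left-hand side is
   2(1-m)(1+m) (P' Q - 3 P Q'), the numerator of (P/Q^3)' divided by Q^2.  It equals
   3 m y (y - 2 m x), which is positive. *)
lemma ratio_numerator_identity:
  fixes m x y x' y' :: real
  assumes "2 * m * (1 + m) * (1 - m) * x' = m * (1 + m) * x - y"
      and "2 * (1 - m) * y' = 2 * x - y"
  shows "2 * (1 - m) * (1 + m) * ((2 * y' + (2 * m - 2) * x + (m^2 - 2 * m) * x') * (y - m * x)
          - 3 * (2 * y + (m^2 - 2 * m) * x) * (y' - x - m * x'))
       = 3 * m * y * (y - 2 * m * x)"
  using assms by algebra

lemma I_of_derivatives:
  assumes "0 < m" "m < 1"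
  obtains P' Q' where "(I1_of has_real_derivative P') (at m)" "(I2_of has_real_derivative Q') (at m)"
    and "0 < P' * I2_of m - 3 * I1_of m * Q'"
proof
  define X' where "X' = (X m / 2 - T m) / (1 - m)"
  define Y' where "Y' = (X m - Y m / 2) / (1 - m)"
  define P' where "P' = (2 * Y' + (2 * m - 2) * X m + (m^2 - 2 * m) * X') / 3"
  define Q' where "Q' = Y' - X m - m * X'"
  have dX: "(X has_real_derivative X') (at m)" unfolding X'_def by (rule X_deriv[OF assms])
  have dY: "(Y has_real_derivative Y') (at m)" unfolding Y'_def by (rule Y_deriv[OF assms])
  show "(I1_of has_real_derivative P') (at m)"
    unfolding I1_of_def[abs_def] P'_def by (rule derivative_eq_intros dX dY refl | simp)+
  show "(I2_of has_real_derivative Q') (at m)"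
    unfolding I2_of_def[abs_def] Q'_def by (rule derivative_eq_intros dX dY refl | simp)+
  have hX': "2 * m * (1 + m) * (1 - m) * X' = m * (1 + m) * X m - Y m"
    unfolding X'_def Y_eq_T[OF assms] using assms by (simp add: field_simps)
  have hY': "2 * (1 - m) * Y' = 2 * X m - Y m"
    unfolding Y'_def using assms by (simp add: field_simps)
  have "3 * (P' * I2_of m - 3 * I1_of m * Q')
      = (2 * Y' + (2 * m - 2) * X m + (m^2 - 2 * m) * X') * (Y m - m * X m)
        - 3 * (2 * Y m + (m^2 - 2 * m) * X m) * (Y' - X m - m * X')"
    unfolding P'_def Q'_def I1_of_def I2_of_def by (simp add: field_simps)
  with ratio_numerator_identity[OF hX' hY']
  have "2 * (1 - m) * (1 + m) * (3 * (P' * I2_of m - 3 * I1_of m * Q')) = 3 * m * Y m * (Y m - 2 * m * X m)"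
    by simp
  moreover have "0 < 3 * m * Y m * (Y m - 2 * m * X m)"
  proof -
    have "0 < 2 * m * X m" using X_pos[of m] assms by simp
    with Y_gt_2mX[OF assms] assms show ?thesis by simp
  qed
  ultimately have "0 < 2 * (1 - m) * (1 + m) * (3 * (P' * I2_of m - 3 * I1_of m * Q'))"
    by (simp only:)
  moreover have "0 < 2 * (1 - m) * (1 + m)" using assms by simp
  ultimately have "0 < 3 * (P' * I2_of m - 3 * I1_of m * Q')" by (rule zero_less_mult_pos)
  then show "0 < P' * I2_of m - 3 * I1_of m * Q'" by (simp add: mult.commute)
qed

definition ratio_of :: "real \<Rightarrow> real" where
  "ratio_of m = I1_of m / I2_of m ^ 3"

lemma ratio_of_deriv_pos:
  assumes "0 < m" "m < 1"
  shows "\<exists>d. (ratio_of has_real_derivative d) (at m) \<and> 0 < d"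
proof -
  obtain P' Q' where dP: "(I1_of has_real_derivative P') (at m)"
    and dQ: "(I2_of has_real_derivative Q') (at m)" and num: "0 < P' * I2_of m - 3 * I1_of m * Q'"
    using I_of_derivatives[OF assms] .
  let ?P = "I1_of m" and ?Q = "I2_of m"
  have Q: "0 < ?Q" by (rule I2_of_pos[OF assms])
  have "((\<lambda>m. I2_of m ^ 3) has_real_derivative 3 * (Q' * ?Q ^ 2)) (at m)"
    using DERIV_power[OF dQ, of 3] by simp
  from DERIV_divide[OF dP this] Q
  have "(ratio_of has_real_derivative (P' * ?Q ^ 3 - ?P * (3 * (Q' * ?Q ^ 2))) / (?Q ^ 3 * ?Q ^ 3)) (at m)"
    unfolding ratio_of_def[abs_def] by simp
  moreover have "P' * ?Q ^ 3 - ?P * (3 * (Q' * ?Q ^ 2)) = ?Q ^ 2 * (P' * ?Q - 3 * ?P * Q')"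
    by (simp add: algebra_simps power2_eq_square power3_eq_cube)
  then have "0 < (P' * ?Q ^ 3 - ?P * (3 * (Q' * ?Q ^ 2))) / (?Q ^ 3 * ?Q ^ 3)"
    using Q num by simp
  ultimately show ?thesis by blast
qed

lemma ratio_of_strict_mono:
  assumes "0 < a" "a < b" "b < 1"
  shows "ratio_of a < ratio_of b"
  using assms ratio_of_deriv_pos by (intro DERIV_pos_imp_increasing[OF assms(2)]) auto

lemma scaled_sin_bounds:
  fixes a t :: real
  assumes "0 < a" "a < 1"
  shows "-1 < a * sin t" "a * sin t < 1" "0 < 1 - (a * sin t)^2"
proof -
  have "\<bar>a * sin t\<bar> \<le> a" using assms abs_sin_le_one[of t] by (simp add: abs_mult mult_left_le)
  then have "\<bar>a * sin t\<bar> < 1" using assms by simp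
  then show "-1 < a * sin t" "a * sin t < 1" "0 < 1 - (a * sin t)^2"
    by (auto simp: abs_square_less_1)
qed

lemma scaled_arcsin_deriv:
  fixes a t :: real
  assumes "0 < a" "a < 1"
  shows "((\<lambda>t. arcsin (a * sin t)) has_real_derivative a * cos t / sqrt (1 - (a * sin t)^2)) (at t)"
  using DERIV_chain2[OF DERIV_arcsin[OF scaled_sin_bounds(1,2)[OF assms]] DERIV_cmult[OF DERIV_sin]]
  by (simp add: divide_inverse mult.commute)

lemma arcsin_substitution_integrand:
  fixes a t :: real and k :: nat
  assumes a: "0 < a" "a < 1" and t: "t \<in> {-pi/2<..<pi/2}"
  defines "m \<equiv> 1 - a^2"
  shows "0 < cos (arcsin (a * sin t)) ^ 4 - m^2"
    and "cos (arcsin (a * sin t)) ^ (2*k+1) / sqrt (cos (arcsin (a * sin t)) ^ 4 - m^2)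
           * (a * cos t / sqrt (1 - (a * sin t)^2)) = (W m t - m)^k / sqrt (W m t)"
proof -
  define p where "p = 1 - (a * sin t)^2"
  have ct: "0 < cos t" using t by (intro cos_gt_zero_pi) auto
  have "-1 \<le> a * sin t" "a * sin t \<le> 1" using scaled_sin_bounds[OF a, of t] by auto
  then have cg: "cos (arcsin (a * sin t)) = sqrt p" unfolding p_def by (rule cos_arcsin)
  have pm: "p - m = (a * cos t)^2"
    unfolding p_def m_def by (simp add: cos_squared_eq algebra_simps)
  have m: "0 < m" using a unfolding m_def by (simp add: power_less_one_iff)
  have "0 < (a * cos t)^2" using a ct by simp
  then have p: "m < p" using pm by linarith
  with m have p0: "0 < p" by linarith
  have "sqrt p ^ 4 = (sqrt p ^ 2) ^ 2" by (simp flip: power_mult)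
  then have c4: "cos (arcsin (a * sin t)) ^ 4 = p^2" unfolding cg using p0 by simp
  have c_odd: "cos (arcsin (a * sin t)) ^ (2*k+1) = p^k * sqrt p"
    unfolding cg using p0 by (simp add: power_mult power_add)
  have diff: "p^2 - m^2 = (a * cos t)^2 * (p + m)"
    using pm by (simp add: algebra_simps power2_eq_square)
  have W: "W m t = p + m"
    unfolding W_def p_def m_def by (simp add: algebra_simps)
  show "0 < cos (arcsin (a * sin t)) ^ 4 - m^2"
    unfolding c4 diff using a ct m p0 by simp
  have sq: "sqrt (p^2 - m^2) = a * cos t * sqrt (p + m)"
    unfolding diff using a ct by (simp add: real_sqrt_mult)
  have "0 < sqrt (p + m)" using m p0 by simp
  then show "cos (arcsin (a * sin t)) ^ (2*k+1) / sqrt (cos (arcsin (a * sin t)) ^ 4 - m^2)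
           * (a * cos t / sqrt (1 - (a * sin t)^2)) = (W m t - m)^k / sqrt (W m t)"
    unfolding c_odd c4 sq W p_def[symmetric] using a ct p0 by (simp add: field_simps)
qed

lemma W_power_continuous:
  assumes "0 < m" "m \<le> 1"
  shows "continuous_on A (\<lambda>t. (W m t - m)^k / sqrt (W m t))"
  using W_pos[OF assms] by (intro continuous_intros W_continuous) (auto simp: less_imp_neq[symmetric])

(* The substitution theorem for the improper integral: the singularities of the integrand at
   the ends are absorbed by the Jacobian, and the transformed integrand is continuous. *)
lemma arcsin_substitution_integral:
  fixes a :: real and k :: nat
  assumes a: "0 < a" "a < 1"
  defines "m \<equiv> 1 - a^2"
  shows "(LBINT x=-arcsin a..arcsin a. cos x ^ (2*k+1) / sqrt (cos x ^ 4 - m^2))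
       = (LBINT t=-pi/2..pi/2. (W m t - m)^k / sqrt (W m t))"
proof -
  define f where "f = (\<lambda>x. cos x ^ (2*k+1) / sqrt (cos x ^ 4 - m^2))"
  define g where "g = (\<lambda>t. arcsin (a * sin t))"
  define g' where "g' = (\<lambda>t. a * cos t / sqrt (1 - (a * sin t)^2))"
  define h where "h = (\<lambda>t. (W m t - m)^k / sqrt (W m t))"
  note bnd = scaled_sin_bounds[OF a]
  have m: "0 < m" "m \<le> 1" using a unfolding m_def by (simp_all add: power_less_one_iff)
  have integrand: "f (g t) * g' t = h t" "0 < cos (g t) ^ 4 - m^2" if "t \<in> {-pi/2<..<pi/2}" for t
    using arcsin_substitution_integrand(1)[OF a that] arcsin_substitution_integrand(2)[OF a that, of k]
    unfolding f_def g_def g'_def h_def m_def by auto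
  have "(LBINT x=g (-pi/2)..g (pi/2). f x) = (LBINT x=-pi/2..pi/2. f (g x) * g' x)"
  proof (rule interval_integral_substitution_nonneg(2)[where a="ereal (-pi/2)" and b="ereal (pi/2)"])
    show "ereal (-pi/2) < ereal (pi/2)" using pi_gt_zero by simp
    show dg: "DERIV g x :> g' x" for x unfolding g_def g'_def by (rule scaled_arcsin_deriv[OF a])
    show "isCont g' x" for x unfolding g'_def using bnd(3)[of x] by (intro continuous_intros) auto
    show "0 \<le> g' x" if "ereal (-pi/2) \<le> ereal x" "ereal x \<le> ereal (pi/2)" for x
    proof -
      have "0 \<le> cos x" using that by (intro cos_ge_zero) auto
      then show ?thesis unfolding g'_def using a bnd(3)[of x]
        by (intro divide_nonneg_nonneg mult_nonneg_nonneg) auto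
    qed
    show "0 \<le> f (g x)" if "ereal (-pi/2) < ereal x" "ereal x < ereal (pi/2)" for x
    proof -
      have "0 \<le> cos (g x)" unfolding g_def using bnd[of x] by (simp add: cos_arcsin)
      then show ?thesis unfolding f_def using integrand(2)[of x] that by simp
    qed
    show "isCont f (g x)" if "ereal (-pi/2) < ereal x" "ereal x < ereal (pi/2)" for x
      unfolding f_def using integrand(2)[of x] that by (intro continuous_intros) auto
    have g_cont: "isCont g x" for x using dg DERIV_isCont by blast
    then show "((ereal \<circ> g \<circ> real_of_ereal) \<longlongrightarrow> ereal (g (-pi/2))) (at_right (ereal (-pi/2)))"
      and "((ereal \<circ> g \<circ> real_of_ereal) \<longlongrightarrow> ereal (g (pi/2))) (at_left (ereal (pi/2)))"
      unfolding ereal_tendsto_simps by (simp_all add: isCont_def filterlim_at_split)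
    have "set_integrable lborel (einterval (-pi/2) (pi/2)) h"
      using W_power_continuous[OF m] unfolding h_def
      by (intro set_integrable_subset[OF borel_integrable_atLeastAtMost', of "-pi/2" "pi/2"]) auto
    then show "set_integrable lborel (einterval (ereal (-pi/2)) (ereal (pi/2))) (\<lambda>x. f (g x) * g' x)"
      by (subst set_integrable_cong[OF refl refl, where f' = h]) (auto simp: integrand)
  qed
  also have "\<dots> = (LBINT x=-pi/2..pi/2. h x)"
    by (rule interval_integral_cong) (use pi_gt_zero in \<open>auto simp: integrand min_def max_def\<close>)
  moreover have "g (-pi/2) = -arcsin a" "g (pi/2) = arcsin a"
    unfolding g_def using a by (simp_all add: arcsin_minus)
  ultimately show ?thesis unfolding f_def h_def by simp
qed

(* In terms of b: with a = sin b we have arcsin a = b and m = cos^2 b.  The result is a proper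
   integral; k = 2 gives I1 and k = 1 gives I2. *)
lemma odd_power_integral_substitution:
  fixes b :: real and k :: nat
  assumes b: "0 < b" "b < pi/2"
  defines "m \<equiv> (cos b)^2"
  shows "(LBINT x=-b..b. cos x ^ (2*k+1) / sqrt (cos x ^ 4 - cos b ^ 4))
       = integral Ipi2 (\<lambda>t. (W m t - m)^k / sqrt (W m t))"
proof -
  have "0 < cos b" using b by (intro cos_gt_zero_pi) auto
  then have m: "m = 1 - (sin b)^2" "0 < m" unfolding m_def by (simp add: cos_squared_eq, simp)
  then have "(sin b)^2 < 1" by linarith
  then have a: "0 < sin b" "sin b < 1"
    using b by (auto intro: sin_gt_zero simp: abs_square_less_1)
  have "cos b ^ 4 = m^2" and "arcsin (sin b) = b"
    unfolding m_def using b by (simp_all add: arcsin_sin)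
  then have "(LBINT x=-b..b. cos x ^ (2*k+1) / sqrt (cos x ^ 4 - cos b ^ 4))
      = (LBINT t=-pi/2..pi/2. (W m t - m)^k / sqrt (W m t))"
    using arcsin_substitution_integral[OF a, of k] unfolding m(1)[symmetric] by simp
  also have "\<dots> = integral Ipi2 (\<lambda>t. (W m t - m)^k / sqrt (W m t))"
  proof (rule interval_integral_eq_integral)
    show "set_integrable lborel {-pi/2..pi/2} (\<lambda>t. (W m t - m)^k / sqrt (W m t))"
      using m by (intro borel_integrable_atLeastAtMost' W_power_continuous) auto
  qed (use pi_gt_zero in simp)
  finally show ?thesis .
qed

lemma cos_sq_in_unit_interval:
  assumes "0 < b" "b < pi/2"
  shows "0 < (cos b)^2" "(cos b)^2 < 1"
proof -
  have "0 < cos b" using assms by (intro cos_gt_zero_pi) auto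
  moreover have "0 < sin b" using assms by (intro sin_gt_zero) auto
  ultimately show "0 < (cos b)^2" "(cos b)^2 < 1" by (simp, simp add: cos_squared_eq)
qed

lemma I2_eq:
  assumes "0 < b" "b < pi/2"
  shows "I2 b = I2_of ((cos b)^2)"
proof -
  define m where "m = (cos b)^2"
  have m: "0 < m" "m < 1" unfolding m_def using cos_sq_in_unit_interval[OF assms] by auto
  have "I2 b = integral Ipi2 (\<lambda>t. (W m t - m) / sqrt (W m t))"
    unfolding I2_def m_def using odd_power_integral_substitution[OF assms, of 1] by simp
  also have "\<dots> = integral Ipi2 (\<lambda>t. sqrt (W m t) - m * (1 / sqrt (W m t)))"
  proof (rule integral_cong)
    fix t
    have "0 < W m t" using W_pos m by simp
    then show "(W m t - m) / sqrt (W m t) = sqrt (W m t) - m * (1 / sqrt (W m t))"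
      by (simp add: field_simps)
  qed
  also have "\<dots> = Y m - m * X m"
    using m by (intro integral_unique has_integral_diff has_integral_mult_right W_moments_has_integral) auto
  finally show ?thesis unfolding I2_of_def m_def .
qed

lemma I1_eq:
  assumes "0 < b" "b < pi/2"
  shows "I1 b = I1_of ((cos b)^2)"
proof -
  define m where "m = (cos b)^2"
  have m: "0 < m" "m < 1" unfolding m_def using cos_sq_in_unit_interval[OF assms] by auto
  have "I1 b = integral Ipi2 (\<lambda>t. (W m t - m)^2 / sqrt (W m t))"
    unfolding I1_def m_def using odd_power_integral_substitution[OF assms, of 2] by simp
  also have "\<dots> = integral Ipi2 (\<lambda>t. W m t * sqrt (W m t) - 2 * m * sqrt (W m t) + m^2 * (1 / sqrt (W m t)))"
  proof (rule integral_cong)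
    fix t
    have w: "0 < W m t" using W_pos m by simp
    then have "W m t = sqrt (W m t) * sqrt (W m t)" by simp
    then show "(W m t - m)^2 / sqrt (W m t) = W m t * sqrt (W m t) - 2 * m * sqrt (W m t) + m^2 * (1 / sqrt (W m t))"
      using w by (subst (1 2) \<open>W m t = _\<close>) (simp add: field_simps power2_eq_square)
  qed
  also have "\<dots> = S m - 2 * m * Y m + m^2 * X m"
    using m by (intro integral_unique has_integral_add has_integral_diff has_integral_mult_right
        W_moments_has_integral) auto
  also have "\<dots> = I1_of m"
    using S_eq[OF m] unfolding I1_of_def by (simp add: field_simps power2_eq_square)
  finally show ?thesis unfolding m_def .
qed

(* b |-> cos^2 b maps (0, pi/2) decreasingly into (0, 1), where the ratio increases. *)
theorem proposition13:
  "strict_antimono_on {0<..<pi/2} (\<lambda>b. I1 b / (I2 b) ^ 3)"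
proof (rule monotone_onI)
  fix b1 b2 assume b1: "b1 \<in> {0<..<pi/2}" and b2: "b2 \<in> {0<..<pi/2}" and "b1 < b2"
  have ratio: "I1 b / (I2 b) ^ 3 = ratio_of ((cos b)^2)" if "b \<in> {0<..<pi/2}" for b
    using that I1_eq I2_eq unfolding ratio_of_def by simp
  have "cos b2 < cos b1" using b1 b2 \<open>b1 < b2\<close> by (intro cos_monotone_0_pi) auto
  moreover have "0 < cos b2" using b2 by (intro cos_gt_zero_pi) auto
  ultimately have "(cos b2)^2 < (cos b1)^2" by (simp add: power_strict_mono)
  then have "ratio_of ((cos b2)^2) < ratio_of ((cos b1)^2)"
    using cos_sq_in_unit_interval b1 b2 by (intro ratio_of_strict_mono) auto
  then show "I1 b2 / (I2 b2) ^ 3 < I1 b1 / (I2 b1) ^ 3" using ratio b1 b2 by simp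
qed

end
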